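(* If $\Gamma_G$ is population monotonic, then $G$ has no subgraph isomorphic to the complete graph $K_4$ (equivalently, no induced subgraph isomorphic to $K_4$).
   Context: $G=(V,E;w)$ is a finite simple graph with edge weights $w:E\to\mathbb{R}$, $w_e>0$ for all $e\in E$. The matching game on $G$ is the cooperative game $\Gamma_G=(N,\gamma)$ with player set $N=V$ and, for $S\subseteq N$, $\gamma(S)$ equal to the maximum weight of a matching in the induced subgraph $G[S]$ (so $\gamma(\emptyset)=0$). A population monotonic allocation scheme (PMAS) is a family $(\boldsymbol{x}_S)_{\emptyset\neq S\subseteq N}$ with $\boldsymbol{x}_S=(x_{S,i})_{i\in S}\in\mathbb{R}^S$ such that (efficiency) $\sum_{i\in S}x_{S,i}=\gamma(S)$ for every nonempty $S\subseteq N$, and (monotonicity) $x_{S,i}\le x_{T,i}$ whenever $\emptyset\ne S\subseteq T\subseteq N$ and $i\in S$. $\Gamma_G$ is called population monotonic if it admits a PMAS. *)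

theory Defs
  imports Complex_Main
begin

definition simple_graph :: "'a set \<Rightarrow> 'a set set \<Rightarrow> bool" where
  "simple_graph V E \<longleftrightarrow> finite V \<and> (\<forall>e\<in>E. \<exists>u v. e = {u, v} \<and> u \<noteq> v \<and> u \<in> V \<and> v \<in> V)"

definition matching_in :: "'a set set \<Rightarrow> 'a set \<Rightarrow> 'a set set \<Rightarrow> bool" where
  "matching_in E S M \<longleftrightarrow> M \<subseteq> E \<and> (\<forall>e\<in>M. e \<subseteq> S)
      \<and> (\<forall>e\<in>M. \<forall>f\<in>M. e \<noteq> f \<longrightarrow> e \<inter> f = {})"

definition match_value :: "'a set set \<Rightarrow> ('a set \<Rightarrow> real) \<Rightarrow> 'a set \<Rightarrow> real" where
  "match_value E w S = Max {sum w M | M. matching_in E S M}"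

text \<open>Population monotonic allocation scheme: x S i is the payoff to i in coalition S.\<close>

definition is_PMAS :: "'a set \<Rightarrow> 'a set set \<Rightarrow> ('a set \<Rightarrow> real) \<Rightarrow> ('a set \<Rightarrow> 'a \<Rightarrow> real) \<Rightarrow> bool" where
  "is_PMAS V E w x \<longleftrightarrow>
     (\<forall>S. S \<subseteq> V \<and> S \<noteq> {} \<longrightarrow> (\<Sum>i\<in>S. x S i) = match_value E w S)
   \<and> (\<forall>S T i. S \<noteq> {} \<and> S \<subseteq> T \<and> T \<subseteq> V \<and> i \<in> S \<longrightarrow> x S i \<le> x T i)"

definition population_monotonic :: "'a set \<Rightarrow> 'a set set \<Rightarrow> ('a set \<Rightarrow> real) \<Rightarrow> bool" where
  "population_monotonic V E w \<longleftrightarrow> (\<exists>x. is_PMAS V E w x)"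

end

theory Submission
  imports Defs
begin

text \<open>Call u the claimant of an edge uv when in the two-player coalition uv it receives at least
  the full weight of the edge. Efficiency on uv and positive weights make this asymmetric. In a
  triangle ijk whose value is at most w ij, monotonicity from the three edges into the triangle
  forces x ijk k \<le> 0, so i and j claim their edges towards k while neither claims ij: every
  triangle has a sink with an unclaimed base. No asymmetric relation on the four vertices of a
  K4 has this property, which rules out K4 in a population monotonic matching game.\<close>

lemma finite_matchings:
  assumes "finite S"
  shows "finite {M. matching_in E S M}"
proof -
  have "{M. matching_in E S M} \<subseteq> Pow (Pow S)"
    unfolding matching_in_def by auto
  then show ?thesis
    using assms by (meson finite_Pow_iff finite_subset)
qed

lemma match_value_le:
  assumes "finite S" and "\<And>M. matching_in E S M \<Longrightarrow> sum w M \<le> c"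
  shows "match_value E w S \<le> c"
proof -
  have "matching_in E S {}"
    unfolding matching_in_def by simp
  then show ?thesis
    unfolding match_value_def Setcompr_eq_image
    using finite_matchings[OF assms(1)] assms(2) by (subst Max_le_iff) auto
qed

lemma match_value_ge:
  assumes "finite S" and "matching_in E S M"
  shows "sum w M \<le> match_value E w S"
  unfolding match_value_def Setcompr_eq_image
  using finite_matchings[OF assms(1)] assms(2) by (intro Max_ge) auto

lemma edge_subset_vertices: "simple_graph V E \<Longrightarrow> e \<in> E \<Longrightarrow> e \<subseteq> V"
  unfolding simple_graph_def by force

lemma edge_within:
  assumes "simple_graph V E" and "f \<in> E" and "f \<subseteq> S"
  obtains p q where "f = {p, q}" and "p \<noteq> q" and "p \<in> S" and "q \<in> S"
proof -
  obtain p q where "f = {p, q}" and "p \<noteq> q"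
    using assms(1,2) unfolding simple_graph_def by blast
  with assms(3) show thesis
    using that by simp
qed

lemma match_value_edge:
  assumes g: "simple_graph V E" and nonneg: "\<forall>e\<in>E. w e \<ge> 0" and uv: "{u, v} \<in> E"
  shows "match_value E w {u, v} = w {u, v}"
proof (rule antisym)
  show "match_value E w {u, v} \<le> w {u, v}"
  proof (rule match_value_le)
    fix M
    assume M: "matching_in E {u, v} M"
    have "M \<subseteq> {{u, v}}"
    proof
      fix f
      assume "f \<in> M"
      then have "f \<in> E" and "f \<subseteq> {u, v}"
        using M unfolding matching_in_def by auto
      then show "f \<in> {{u, v}}"
        using g by (elim edge_within) auto
    qed
    then have "M = {} \<or> M = {{u, v}}"
      by auto
    then show "sum w M \<le> w {u, v}"
      using nonneg uv by auto
  qed simp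
next
  have "matching_in E {u, v} {{u, v}}"
    using uv unfolding matching_in_def by simp
  from match_value_ge[OF _ this] show "w {u, v} \<le> match_value E w {u, v}"
    by simp
qed

lemma matching_in_triangle:
  assumes g: "simple_graph V E" and M: "matching_in E {i, j, k} M"
  shows "M = {} \<or> (\<exists>f\<in>{{i, j}, {i, k}, {j, k}}. M = {f})"
proof -
  have sides: "f \<in> {{i, j}, {i, k}, {j, k}}" if "f \<in> M" for f
  proof -
    have "f \<in> E" and "f \<subseteq> {i, j, k}"
      using M \<open>f \<in> M\<close> unfolding matching_in_def by auto
    then show ?thesis
      using g by (elim edge_within) (auto simp: insert_commute)
  qed
  have "f = h" if "f \<in> M" and "h \<in> M" for f h
  proof (rule ccontr)
    assume "f \<noteq> h"
    then have "f \<inter> h = {}"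
      using M that unfolding matching_in_def by blast
    with \<open>f \<noteq> h\<close> sides[OF \<open>f \<in> M\<close>] sides[OF \<open>h \<in> M\<close>] show False
      by auto
  qed
  then show ?thesis
    using sides by blast
qed

lemma match_value_triangle_le:
  assumes g: "simple_graph V E" and nonneg: "\<forall>e\<in>E. w e \<ge> 0" and ij: "{i, j} \<in> E"
  shows "match_value E w {i, j, k} \<le> max (w {i, j}) (max (w {i, k}) (w {j, k}))"
proof (rule match_value_le)
  fix M
  assume "matching_in E {i, j, k} M"
  then show "sum w M \<le> max (w {i, j}) (max (w {i, k}) (w {j, k}))"
    using matching_in_triangle[OF g] nonneg ij by fastforce
qed simp

lemma is_PMAS_efficient:
  assumes "is_PMAS V E w x" and "S \<subseteq> V" and "S \<noteq> {}"
  shows "(\<Sum>i\<in>S. x S i) = match_value E w S"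
  using assms unfolding is_PMAS_def by blast

lemma is_PMAS_monotone:
  assumes "is_PMAS V E w x" and "S \<noteq> {}" and "S \<subseteq> T" and "T \<subseteq> V" and "i \<in> S"
  shows "x S i \<le> x T i"
  using assms unfolding is_PMAS_def by blast

lemma is_PMAS_edge:
  assumes g: "simple_graph V E" and nonneg: "\<forall>e\<in>E. w e \<ge> 0" and P: "is_PMAS V E w x"
    and uv: "{u, v} \<in> E" and "u \<noteq> v"
  shows "x {u, v} u + x {u, v} v = w {u, v}"
  using is_PMAS_efficient[OF P edge_subset_vertices[OF g uv]] match_value_edge[OF g nonneg uv]
    \<open>u \<noteq> v\<close> by simp

definition claims_edge :: "('a set \<Rightarrow> 'a \<Rightarrow> real) \<Rightarrow> ('a set \<Rightarrow> real) \<Rightarrow> 'a \<Rightarrow> 'a \<Rightarrow> bool"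
  where "claims_edge x w u v \<longleftrightarrow> w {u, v} \<le> x {u, v} u"

definition triangle_sink :: "('v \<Rightarrow> 'v \<Rightarrow> bool) \<Rightarrow> 'v \<Rightarrow> 'v \<Rightarrow> 'v \<Rightarrow> bool"
  where "triangle_sink r i j k \<longleftrightarrow> r i k \<and> r j k \<and> \<not> r i j \<and> \<not> r j i"

lemma claims_edge_asym:
  assumes g: "simple_graph V E" and pos: "\<forall>e\<in>E. w e > 0" and P: "is_PMAS V E w x"
    and uv: "{u, v} \<in> E" and "u \<noteq> v"
  shows "\<not> (claims_edge x w u v \<and> claims_edge x w v u)"
proof -
  have "x {u, v} u + x {u, v} v = w {u, v}"
    using is_PMAS_edge[OF g _ P uv \<open>u \<noteq> v\<close>] pos by (simp add: less_imp_le)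
  moreover have "w {u, v} > 0"
    using pos uv by blast
  ultimately show ?thesis
    unfolding claims_edge_def by (simp add: insert_commute)
qed

lemma triangle_sink_of_light_base:
  assumes g: "simple_graph V E" and pos: "\<forall>e\<in>E. w e > 0" and P: "is_PMAS V E w x"
    and ij: "{i, j} \<in> E" and ik: "{i, k} \<in> E" and jk: "{j, k} \<in> E"
    and distinct: "distinct [i, j, k]"
    and light: "match_value E w {i, j, k} \<le> w {i, j}"
  shows "triangle_sink (claims_edge x w) i j k"
proof -
  let ?T = "{i, j, k}"
  have nonneg: "\<forall>e\<in>E. w e \<ge> 0"
    using pos by (simp add: less_imp_le)
  have T: "?T \<subseteq> V"
    using edge_subset_vertices[OF g ij] edge_subset_vertices[OF g ik] by auto
  have sum_T: "x ?T i + x ?T j + x ?T k \<le> w {i, j}"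
    using is_PMAS_efficient[OF P T] distinct light by simp
  have mono: "x S l \<le> x ?T l" if "S \<subseteq> ?T" and "l \<in> S" for S l
    using is_PMAS_monotone[OF P _ that(1) T that(2)] that(2) by blast
  have "x {i, j} i \<le> x ?T i" "x {i, j} j \<le> x ?T j"
       "x {i, k} i \<le> x ?T i" "x {i, k} k \<le> x ?T k"
       "x {j, k} j \<le> x ?T j" "x {j, k} k \<le> x ?T k"
    by (auto intro: mono)
  moreover have "x {i, j} i + x {i, j} j = w {i, j}"
    "x {i, k} i + x {i, k} k = w {i, k}" "x {j, k} j + x {j, k} k = w {j, k}"
    using is_PMAS_edge[OF g nonneg P] ij ik jk distinct by auto
  moreover have "w {i, k} > 0" "w {j, k} > 0"
    using pos ik jk by auto
  ultimately show ?thesis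
    using sum_T unfolding triangle_sink_def claims_edge_def by (simp add: insert_commute)
qed

lemma triangle_has_sink:
  assumes g: "simple_graph V E" and pos: "\<forall>e\<in>E. w e > 0" and P: "is_PMAS V E w x"
    and ij: "{i, j} \<in> E" and ik: "{i, k} \<in> E" and jk: "{j, k} \<in> E"
    and distinct: "distinct [i, j, k]"
  shows "triangle_sink (claims_edge x w) i j k \<or> triangle_sink (claims_edge x w) i k j
    \<or> triangle_sink (claims_edge x w) j k i"
proof -
  note light = triangle_sink_of_light_base[OF g pos P]
  have "match_value E w {i, j, k} \<le> max (w {i, j}) (max (w {i, k}) (w {j, k}))"
    using match_value_triangle_le[OF g _ ij] pos by (simp add: less_imp_le)
  then consider "match_value E w {i, j, k} \<le> w {i, j}"
    | "match_value E w {i, k, j} \<le> w {i, k}"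
    | "match_value E w {j, k, i} \<le> w {j, k}"
    by (auto simp: max_def insert_commute split: if_splits)
  then show ?thesis
  proof cases
    case 1
    then show ?thesis using light[OF ij ik jk] distinct by blast
  next
    case 2
    have "{k, j} \<in> E"
      using jk by (simp add: insert_commute)
    from light[OF ik ij this] 2 distinct show ?thesis by auto
  next
    case 3
    have "{j, i} \<in> E" "{k, i} \<in> E"
      using ij ik by (simp_all add: insert_commute)
    from light[OF jk this] 3 distinct show ?thesis by auto
  qed
qed

text \<open>Each triangle contains exactly one edge claimed by neither end, namely the base of its
  sink, and each edge lies in two triangles, so there are two such edges and they are disjoint,
  say ab and cd. Then c is the sink of abc and a the sink of acd, so a and c both claim ac.\<close>

lemma K4_has_no_asymmetric_sink_relation:
  assumes "distinct [a, b, c, d]"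
    and asym: "\<And>u v. u \<in> {a, b, c, d} \<Longrightarrow> v \<in> {a, b, c, d} \<Longrightarrow> u \<noteq> v \<Longrightarrow> \<not> (r u v \<and> r v u)"
    and sink: "\<And>i j k. {i, j, k} \<subseteq> {a, b, c, d} \<Longrightarrow> distinct [i, j, k] \<Longrightarrow>
      triangle_sink r i j k \<or> triangle_sink r i k j \<or> triangle_sink r j k i"
  shows False
proof -
  have "\<not> (r a b \<and> r b a)" "\<not> (r a c \<and> r c a)" "\<not> (r a d \<and> r d a)"
    "\<not> (r b c \<and> r c b)" "\<not> (r b d \<and> r d b)" "\<not> (r c d \<and> r d c)"
    using assms(1) asym by simp_all
  moreover have "triangle_sink r a b c \<or> triangle_sink r a c b \<or> triangle_sink r b c a"
    "triangle_sink r a b d \<or> triangle_sink r a d b \<or> triangle_sink r b d a"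
    "triangle_sink r a c d \<or> triangle_sink r a d c \<or> triangle_sink r c d a"
    "triangle_sink r b c d \<or> triangle_sink r b d c \<or> triangle_sink r c d b"
    using assms(1) by (simp_all add: sink)
  ultimately show False
    unfolding triangle_sink_def by sat
qed

theorem mainTheorem9:
  fixes V :: "'a set" and E :: "'a set set" and w :: "'a set \<Rightarrow> real"
  assumes "simple_graph V E"
    and "\<forall>e\<in>E. w e > 0"
    and "population_monotonic V E w"
  shows "\<not> (\<exists>a b c d. distinct [a, b, c, d]
              \<and> {a, b} \<in> E \<and> {a, c} \<in> E \<and> {a, d} \<in> E
              \<and> {b, c} \<in> E \<and> {b, d} \<in> E \<and> {c, d} \<in> E)"
proof
  assume "\<exists>a b c d. distinct [a, b, c, d]
              \<and> {a, b} \<in> E \<and> {a, c} \<in> E \<and> {a, d} \<in> E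
              \<and> {b, c} \<in> E \<and> {b, d} \<in> E \<and> {c, d} \<in> E"
  then obtain a b c d where abcd: "distinct [a, b, c, d]"
    and "{a, b} \<in> E" "{a, c} \<in> E" "{a, d} \<in> E" "{b, c} \<in> E" "{b, d} \<in> E" "{c, d} \<in> E"
    by blast
  then have edge: "{u, v} \<in> E" if "u \<in> {a, b, c, d}" "v \<in> {a, b, c, d}" "u \<noteq> v" for u v
    using that by (auto simp: insert_commute)
  obtain x where P: "is_PMAS V E w x"
    using assms(3) unfolding population_monotonic_def by blast
  show False
  proof (rule K4_has_no_asymmetric_sink_relation[OF abcd, where r = "claims_edge x w"])
    show "\<not> (claims_edge x w u v \<and> claims_edge x w v u)"
      if "u \<in> {a, b, c, d}" "v \<in> {a, b, c, d}" "u \<noteq> v" for u v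
      using claims_edge_asym[OF assms(1,2) P edge[OF that] \<open>u \<noteq> v\<close>] .
    show "triangle_sink (claims_edge x w) i j k \<or> triangle_sink (claims_edge x w) i k j
        \<or> triangle_sink (claims_edge x w) j k i"
      if "{i, j, k} \<subseteq> {a, b, c, d}" "distinct [i, j, k]" for i j k
      using that by (intro triangle_has_sink[OF assms(1,2) P] edge) auto
  qed
qed

end
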